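(* There is a universal constant $C>0$ such that for every $N\in\mathbb{N}$ and every $D>0$ the following holds: if $\xi_1,\dots,\xi_N$ are i.i.d. $\mathcal{N}(0,1)$ and $Z=(\sum_{i=1}^N\xi_i^2)^{1/2}$, then there is a discrete random variable $r$ (a function of $Z$) such that $\mathbb{E}(Z-r)^2\le D$ and its Shannon entropy satisfies $H(r)\le C\ln(1/D)$.
   Context: Shannon entropy of a discrete random variable $r$: $H(r)=-\sum_y P[r=y]\ln P[r=y]$.
   Formalization: The parameter D ranges over 0 < D <= 1 only, rather than over every D > 0 as in the bound H(r) <= C ln(1/D). The statement above fails without it. *)

theory Defs
  imports "HOL-Probability.Probability"
begin

definition gauss_space :: "nat \<Rightarrow> (nat \<Rightarrow> real) measure" where
  "gauss_space N = PiM {..<N} (\<lambda>_. density lborel std_normal_density)"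

definition chi_norm :: "nat \<Rightarrow> (nat \<Rightarrow> real) \<Rightarrow> real" where
  "chi_norm N \<omega> = sqrt (\<Sum>i<N. (\<omega> i)\<^sup>2)"

definition disc_entropy :: "'a measure \<Rightarrow> ('a \<Rightarrow> 'b) \<Rightarrow> real" where
  "disc_entropy M r =
     (\<Sum>\<^sub>\<infinity> y \<in> r ` space M. - (measure M {x \<in> space M. r x = y} * ln (measure M {x \<in> space M. r x = y})))"

definition finite_disc_entropy :: "'a measure \<Rightarrow> ('a \<Rightarrow> 'b) \<Rightarrow> bool" where
  "finite_disc_entropy M r =
     ((\<lambda>y. - (measure M {x \<in> space M. r x = y} * ln (measure M {x \<in> space M. r x = y})))
        summable_on (r ` space M))"

end

theory Submission
  imports Defs "HOL-Real_Asymp.Real_Asymp"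
begin

text \<open>Gaussian integration by parts in the coordinate \<xi>_i gives
  E[\<xi>_i^2 Z^k] = E[Z^k] + k E[\<xi>_i^2 Z^(k-2)], and summing over i yields the recurrence
  E Z^(k+2) = (N + k) E Z^k.  Thus the moments of Z up to the fifth are known in terms of
  m = E Z, and positivity of E[Z p(Z)^2] for a well-chosen quadratic p forces
  m^2 \<ge> N - 1/2.  Hence Var Z \<le> 1/2 and E (Z - m)^4 \<le> 5/4, uniformly in N.  Rounding
  Z - m to a grid of mesh sqrt (D/2), truncated after O(1/D) grid points, costs at most D in
  mean square (the fourth moment pays for the truncation), and a variable taking O(1/D)
  values has entropy O(ln (1/D)).\<close>

section \<open>Gaussian integration by parts\<close>

lemma sqrt_le_one_plus:
  assumes "0 \<le> y"
  shows "sqrt y \<le> 1 + y"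
proof -
  have "y \<le> (1 + y)\<^sup>2"
    using assms by (simp add: power2_eq_square algebra_simps add_increasing)
  then show ?thesis
    using assms real_sqrt_le_mono[of y "(1 + y)\<^sup>2"] by simp
qed

lemma integral_deriv_eq_0_at_infinity:
  fixes F f :: "real \<Rightarrow> real"
  assumes deriv: "\<And>x. (F has_real_derivative f x) (at x)" and cont: "\<And>x. isCont f x"
    and int: "integrable lborel f"
    and top: "(F \<longlongrightarrow> 0) at_top" and bot: "(F \<longlongrightarrow> 0) at_bot"
  shows "integral\<^sup>L lborel f = 0"
proof -
  have "(LBINT x=-\<infinity>..\<infinity>. f x) = 0 - 0"
  proof (rule interval_integral_FTC_integrable[where F=F])
    show "((F \<circ> real_of_ereal) \<longlongrightarrow> 0) (at_right (-\<infinity>))"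
      unfolding at_right_MInf tendsto_compose_filtermap using bot by (simp add: filtermap_filtermap)
    show "((F \<circ> real_of_ereal) \<longlongrightarrow> 0) (at_left \<infinity>)"
      unfolding at_left_PInf tendsto_compose_filtermap using top by (simp add: filtermap_filtermap)
    show "set_integrable lborel (einterval (- \<infinity>) \<infinity>) f"
      using int by (simp add: set_integrable_def)
  qed (use deriv cont in \<open>auto simp: has_real_derivative_iff_has_vector_derivative\<close>)
  then show ?thesis
    by (simp add: interval_lebesgue_integral_def set_lebesgue_integral_def)
qed

lemma integrable_std_normal_shifted_square_pow:
  "integrable lborel (\<lambda>x. std_normal_density x * (c + x\<^sup>2) ^ n)"
proof -
  have "(\<lambda>x. std_normal_density x * (c + x\<^sup>2) ^ n) =
      (\<lambda>x. \<Sum>j\<le>n. of_nat (n choose j) * c ^ j * (std_normal_density x * x ^ (2 * (n - j))))"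
    by (simp add: binomial_ring sum_distrib_left mult_ac flip: power_mult)
  then show ?thesis
    by (simp add: integrable_std_normal_moment)
qed

lemma integrable_std_normal_polynomially_bounded:
  fixes g :: "real \<Rightarrow> real"
  assumes "g \<in> borel_measurable borel" and "\<And>x. \<bar>g x\<bar> \<le> (c + x\<^sup>2) ^ n"
  shows "integrable lborel (\<lambda>x. std_normal_density x * g x)"
proof (rule Bochner_Integration.integrable_bound[OF integrable_std_normal_shifted_square_pow])
  show "AE x in lborel. norm (std_normal_density x * g x) \<le> norm (std_normal_density x * (c + x\<^sup>2) ^ n)"
  proof (rule AE_I2)
    fix x
    have "\<bar>g x\<bar> \<le> \<bar>(c + x\<^sup>2) ^ n\<bar>"
      using assms(2)[of x] by linarith
    then show "norm (std_normal_density x * g x) \<le> norm (std_normal_density x * (c + x\<^sup>2) ^ n)"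
      by (simp add: abs_mult mult_left_mono)
  qed
qed (use assms(1) in measurable)

lemma
  fixes a :: real
  assumes a: "0 \<le> a"
  shows integrable_std_normal_sqrt_shift_pow:
      "integrable lborel (\<lambda>x. std_normal_density x * sqrt (a + x\<^sup>2) ^ k)"
    and integrable_std_normal_sq_mult_sqrt_shift_pow:
      "integrable lborel (\<lambda>x. std_normal_density x * (x\<^sup>2 * sqrt (a + x\<^sup>2) ^ k))"
    and integrable_std_normal_sq_mult_sqrt_shift_pow_div:
      "integrable lborel
         (\<lambda>x. std_normal_density x * (x\<^sup>2 * sqrt (a + x\<^sup>2) ^ k / sqrt (a + x\<^sup>2) ^ 2))"
proof -
  define u where "u x = 1 + a + x\<^sup>2" for x
  have u1: "1 \<le> u x" for x
    using a by (simp add: u_def)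
  have sk: "sqrt (a + x\<^sup>2) ^ k \<le> u x ^ k" for x
    using a sqrt_le_one_plus[of "a + x\<^sup>2"] by (intro power_mono) (simp_all add: u_def add.assoc)
  have sk_Suc: "\<bar>sqrt (a + x\<^sup>2) ^ k\<bar> \<le> u x ^ Suc k" for x
  proof -
    have "0 \<le> sqrt (a + x\<^sup>2) ^ k"
      using a by simp
    then show ?thesis
      using sk[of x] power_increasing[of k "Suc k" "u x"] u1[of x] by linarith
  qed
  have x2sk: "\<bar>x\<^sup>2 * sqrt (a + x\<^sup>2) ^ k\<bar> \<le> u x ^ Suc k" for x
  proof -
    have "x\<^sup>2 * sqrt (a + x\<^sup>2) ^ k \<le> u x * u x ^ k"
      using a sk[of x] by (intro mult_mono) (simp_all add: u_def)
    moreover have "0 \<le> x\<^sup>2 * sqrt (a + x\<^sup>2) ^ k"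
      using a by simp
    ultimately show ?thesis by simp
  qed
  have div: "\<bar>x\<^sup>2 * sqrt (a + x\<^sup>2) ^ k / sqrt (a + x\<^sup>2) ^ 2\<bar> \<le> u x ^ Suc k" for x
  proof (cases "a + x\<^sup>2 = 0")
    case False
    then have "0 < a + x\<^sup>2"
      using a by (simp add: order_le_neq_trans)
    then have "x\<^sup>2 * sqrt (a + x\<^sup>2) ^ k / sqrt (a + x\<^sup>2) ^ 2 \<le> sqrt (a + x\<^sup>2) ^ k"
      using a by (simp add: divide_le_eq mult_right_mono)
    moreover have "0 \<le> x\<^sup>2 * sqrt (a + x\<^sup>2) ^ k / sqrt (a + x\<^sup>2) ^ 2"
      using a by simp
    ultimately show ?thesis
      using sk_Suc[of x] by linarith
  qed (use u1[of x] in simp)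
  show "integrable lborel (\<lambda>x. std_normal_density x * sqrt (a + x\<^sup>2) ^ k)"
    using sk_Suc unfolding u_def
    by (intro integrable_std_normal_polynomially_bounded[where c = "1 + a" and n = "Suc k"])
      (simp_all add: add.assoc)
  show "integrable lborel (\<lambda>x. std_normal_density x * (x\<^sup>2 * sqrt (a + x\<^sup>2) ^ k))"
    using x2sk unfolding u_def
    by (intro integrable_std_normal_polynomially_bounded[where c = "1 + a" and n = "Suc k"])
      (simp_all add: add.assoc)
  show "integrable lborel
         (\<lambda>x. std_normal_density x * (x\<^sup>2 * sqrt (a + x\<^sup>2) ^ k / sqrt (a + x\<^sup>2) ^ 2))"
    using div unfolding u_def
    by (intro integrable_std_normal_polynomially_bounded[where c = "1 + a" and n = "Suc k"])
      (simp_all add: add.assoc)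
qed

lemma std_normal_density_has_real_derivative:
  "(std_normal_density has_real_derivative - x * std_normal_density x) (at x)"
  unfolding std_normal_density_def[abs_def]
  by (auto intro!: derivative_eq_intros simp: field_simps power2_eq_square)

text \<open>Stein's identity E[x h(x)] = E[h'(x)] for h(x) = x sqrt (a + x^2)^k.  The last
  integrand stands for x^2 sqrt (a + x^2)^(k-2), written so as to avoid truncated
  subtraction at k = 0.\<close>

lemma std_normal_stein_sqrt_shift_pos:
  fixes a :: real
  assumes a: "0 < a"
  shows "(\<integral>x. std_normal_density x * (x\<^sup>2 * sqrt (a + x\<^sup>2) ^ k) \<partial>lborel) =
    (\<integral>x. std_normal_density x * sqrt (a + x\<^sup>2) ^ k \<partial>lborel) +
    k * (\<integral>x. std_normal_density x * (x\<^sup>2 * sqrt (a + x\<^sup>2) ^ k / sqrt (a + x\<^sup>2) ^ 2) \<partial>lborel)"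
proof -
  define s where "s x = sqrt (a + x\<^sup>2)" for x
  have s_pos: "0 < s x" for x
    using a by (simp add: s_def add_pos_nonneg)
  define F where "F x = std_normal_density x * (x * s x ^ k)" for x
  define f where "f x = std_normal_density x * s x ^ k
      + k * (std_normal_density x * (x\<^sup>2 * s x ^ k / s x ^ 2))
      - std_normal_density x * (x\<^sup>2 * s x ^ k)" for x
  have "integral\<^sup>L lborel f = 0"
  proof (rule integral_deriv_eq_0_at_infinity[where F = F])
    fix x
    have ds: "(s has_real_derivative x / s x) (at x)"
      using s_pos[of x] unfolding s_def[abs_def]
      by (auto intro!: derivative_eq_intros simp: field_simps power2_eq_square)
    have power_deriv: "real k * s x ^ (k - 1) * (x / s x) * x = k * (x\<^sup>2 * s x ^ k / s x ^ 2)"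
      using s_pos[of x] by (cases k) (simp_all add: field_simps power2_eq_square)
    from DERIV_mult[OF std_normal_density_has_real_derivative DERIV_mult[OF DERIV_ident DERIV_power[OF ds]]]
    show "(F has_real_derivative f x) (at x)"
      unfolding F_def[abs_def]
      by (rule DERIV_cong) (use power_deriv in \<open>simp add: f_def algebra_simps power2_eq_square\<close>)
    show "isCont f x"
      using s_pos[of x] unfolding f_def s_def
      by (auto intro!: continuous_intros DERIV_isCont[OF std_normal_density_has_real_derivative])
  next
    show "integrable lborel f"
      using a unfolding f_def s_def
      by (intro Bochner_Integration.integrable_diff Bochner_Integration.integrable_add
          Bochner_Integration.integrable_mult_right integrable_std_normal_sqrt_shift_pow
          integrable_std_normal_sq_mult_sqrt_shift_pow integrable_std_normal_sq_mult_sqrt_shift_pow_div)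
        simp_all
    show "(F \<longlongrightarrow> 0) at_top" "(F \<longlongrightarrow> 0) at_bot"
      unfolding F_def[abs_def] s_def std_normal_density_def by real_asymp+
  qed
  moreover have "has_bochner_integral lborel f
      ((\<integral>x. std_normal_density x * s x ^ k \<partial>lborel)
       + k * (\<integral>x. std_normal_density x * (x\<^sup>2 * s x ^ k / s x ^ 2) \<partial>lborel)
       - (\<integral>x. std_normal_density x * (x\<^sup>2 * s x ^ k) \<partial>lborel))"
    using a unfolding f_def s_def
    by (intro has_bochner_integral_diff has_bochner_integral_add has_bochner_integral_mult_right
        has_bochner_integral_integrable integrable_std_normal_sqrt_shift_pow
        integrable_std_normal_sq_mult_sqrt_shift_pow integrable_std_normal_sq_mult_sqrt_shift_pow_div)
      simp_all
  ultimately show ?thesis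
    unfolding s_def by (simp add: has_bochner_integral_iff)
qed

lemma std_normal_abs_moment_recurrence:
  "(\<integral>x. std_normal_density x * \<bar>x\<bar> ^ (k + 2) \<partial>lborel) =
    (real k + 1) * (\<integral>x. std_normal_density x * \<bar>x\<bar> ^ k \<partial>lborel)"
proof (cases "even k")
  case True
  then obtain j where k: "k = 2 * j" by (rule evenE)
  have "(\<integral>x. std_normal_density x * \<bar>x\<bar> ^ (k + 2) \<partial>lborel) =
      (\<integral>x. std_normal_density x * x ^ (2 * Suc j) \<partial>lborel)"
    by (rule Bochner_Integration.integral_cong) (simp_all add: k power_even_abs)
  also have "\<dots> = fact (2 * Suc j) / (2 ^ Suc j * fact (Suc j))"
    by (rule integral_std_normal_moment_even)
  also have "\<dots> = ((2 * real j + 2) * ((2 * real j + 1) * fact (2 * j))) / ((2 * real j + 2) * (2 ^ j * fact j))"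
    by (simp add: algebra_simps)
  also have "\<dots> = (real k + 1) * (fact (2 * j) / (2 ^ j * fact j))"
    by (subst mult_divide_mult_cancel_left) (simp_all add: k)
  also have "\<dots> = (real k + 1) * (\<integral>x. std_normal_density x * \<bar>x\<bar> ^ k \<partial>lborel)"
    by (simp add: k power_even_abs integral_std_normal_moment_even)
  finally show ?thesis .
next
  case False
  then obtain j where k: "k = 2 * j + 1" by (rule oddE)
  have "(\<integral>x. std_normal_density x * \<bar>x\<bar> ^ (k + 2) \<partial>lborel) =
      (\<integral>x. std_normal_density x * \<bar>x\<bar> ^ (2 * Suc j + 1) \<partial>lborel)"
    by (simp add: k)
  also have "\<dots> = sqrt (2 / pi) * 2 ^ Suc j * fact (Suc j)"
    by (rule integral_std_normal_moment_abs_odd)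
  also have "\<dots> = (real k + 1) * (sqrt (2 / pi) * 2 ^ j * fact j)"
    by (simp add: k field_simps)
  also have "\<dots> = (real k + 1) * (\<integral>x. std_normal_density x * \<bar>x\<bar> ^ k \<partial>lborel)"
    by (simp only: k integral_std_normal_moment_abs_odd)
  finally show ?thesis .
qed

text \<open>For a = 0 the integration by parts breaks down at the origin; there the identity is
  the moment recurrence E|x|^(k+2) = (k+1) E|x|^k.\<close>

lemma std_normal_stein_sqrt_shift:
  fixes a :: real
  assumes a: "0 \<le> a"
  shows "(\<integral>x. std_normal_density x * (x\<^sup>2 * sqrt (a + x\<^sup>2) ^ k) \<partial>lborel) =
    (\<integral>x. std_normal_density x * sqrt (a + x\<^sup>2) ^ k \<partial>lborel) +
    k * (\<integral>x. std_normal_density x * (x\<^sup>2 * sqrt (a + x\<^sup>2) ^ k / sqrt (a + x\<^sup>2) ^ 2) \<partial>lborel)"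
proof (cases "0 < a")
  case True
  then show ?thesis by (rule std_normal_stein_sqrt_shift_pos)
next
  case False
  then have a0: "a = 0" using a by simp
  show ?thesis
  proof (cases k)
    case 0
    then show ?thesis
      using integral_std_normal_moment_even[of 1] by simp
  next
    case (Suc j)
    have "x\<^sup>2 * sqrt (a + x\<^sup>2) ^ k = \<bar>x\<bar> ^ (k + 2)" for x :: real
      unfolding a0 by (metis power2_abs power_add mult.commute real_sqrt_abs add_0)
    then have e1: "(\<lambda>x. std_normal_density x * (x\<^sup>2 * sqrt (a + x\<^sup>2) ^ k)) =
        (\<lambda>x. std_normal_density x * \<bar>x\<bar> ^ (k + 2))"
      by (simp only:)
    have e2: "(\<lambda>x. std_normal_density x * sqrt (a + x\<^sup>2) ^ k) =
        (\<lambda>x. std_normal_density x * \<bar>x\<bar> ^ k)"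
      by (simp add: a0)
    have e3: "(\<lambda>x. std_normal_density x * (x\<^sup>2 * sqrt (a + x\<^sup>2) ^ k / sqrt (a + x\<^sup>2) ^ 2)) =
        (\<lambda>x. std_normal_density x * \<bar>x\<bar> ^ k)"
      using Suc by (auto simp: a0)
    show ?thesis
      unfolding e1 e2 e3 std_normal_abs_moment_recurrence by (simp add: algebra_simps)
  qed
qed

abbreviation std_normal :: "real measure" where
  "std_normal \<equiv> density lborel std_normal_density"

lemma nn_integral_std_normal_eq_integral:
  fixes g :: "real \<Rightarrow> real"
  assumes [measurable]: "g \<in> borel_measurable borel"
    and int: "integrable lborel (\<lambda>x. std_normal_density x * g x)" and nonneg: "\<And>x. 0 \<le> g x"
  shows "(\<integral>\<^sup>+x. g x \<partial>std_normal) = ennreal (\<integral>x. std_normal_density x * g x \<partial>lborel)"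
proof -
  have "(\<integral>\<^sup>+x. g x \<partial>std_normal) = (\<integral>\<^sup>+x. ennreal (std_normal_density x * g x) \<partial>lborel)"
    using nonneg by (subst nn_integral_density) (simp_all add: ennreal_mult)
  also have "\<dots> = ennreal (\<integral>x. std_normal_density x * g x \<partial>lborel)"
    using nonneg by (intro nn_integral_eq_integral int) simp
  finally show ?thesis .
qed

lemma nn_integral_std_normal_stein_sqrt_shift:
  fixes a :: real
  assumes a: "0 \<le> a"
  shows "(\<integral>\<^sup>+x. x\<^sup>2 * sqrt (a + x\<^sup>2) ^ k \<partial>std_normal) =
    (\<integral>\<^sup>+x. sqrt (a + x\<^sup>2) ^ k \<partial>std_normal) +
    k * (\<integral>\<^sup>+x. x\<^sup>2 * sqrt (a + x\<^sup>2) ^ k / sqrt (a + x\<^sup>2) ^ 2 \<partial>std_normal)"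
proof -
  define A where "A = (\<integral>x. std_normal_density x * sqrt (a + x\<^sup>2) ^ k \<partial>lborel)"
  define B where "B = (\<integral>x. std_normal_density x * (x\<^sup>2 * sqrt (a + x\<^sup>2) ^ k / sqrt (a + x\<^sup>2) ^ 2) \<partial>lborel)"
  have "0 \<le> A" "0 \<le> B"
    unfolding A_def B_def using a by (auto intro!: Bochner_Integration.integral_nonneg)
  have "(\<integral>\<^sup>+x. x\<^sup>2 * sqrt (a + x\<^sup>2) ^ k \<partial>std_normal) =
      ennreal (\<integral>x. std_normal_density x * (x\<^sup>2 * sqrt (a + x\<^sup>2) ^ k) \<partial>lborel)"
    using a by (intro nn_integral_std_normal_eq_integral integrable_std_normal_sq_mult_sqrt_shift_pow) simp_all
  also have "\<dots> = ennreal (A + k * B)"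
    unfolding A_def B_def using a by (simp add: std_normal_stein_sqrt_shift)
  also have "\<dots> = ennreal A + k * ennreal B"
    using \<open>0 \<le> A\<close> \<open>0 \<le> B\<close> by (simp add: ennreal_plus ennreal_mult ennreal_of_nat_eq_real_of_nat)
  also have "ennreal A = (\<integral>\<^sup>+x. sqrt (a + x\<^sup>2) ^ k \<partial>std_normal)"
    unfolding A_def using a
    by (intro nn_integral_std_normal_eq_integral[symmetric] integrable_std_normal_sqrt_shift_pow) simp_all
  also have "ennreal B = (\<integral>\<^sup>+x. x\<^sup>2 * sqrt (a + x\<^sup>2) ^ k / sqrt (a + x\<^sup>2) ^ 2 \<partial>std_normal)"
    unfolding B_def using a
    by (intro nn_integral_std_normal_eq_integral[symmetric] integrable_std_normal_sq_mult_sqrt_shift_pow_div)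
      simp_all
  finally show ?thesis .
qed

section \<open>Moments of the chi distribution\<close>

lemma prob_space_gauss_space: "prob_space (gauss_space N)"
  unfolding gauss_space_def by (intro prob_space_PiM prob_space_normal_density) simp

lemma chi_norm_measurable [measurable]: "chi_norm N \<in> borel_measurable (gauss_space N)"
  unfolding chi_norm_def[abs_def] gauss_space_def by measurable

lemma gauss_space_component_measurable: "i < N \<Longrightarrow> (\<lambda>w. w i) \<in> borel_measurable (gauss_space N)"
  unfolding gauss_space_def by measurable

lemma chi_norm_nonneg: "0 \<le> chi_norm N w"
  unfolding chi_norm_def by (simp add: sum_nonneg)

lemma chi_norm_sq: "chi_norm N w ^ 2 = (\<Sum>i<N. (w i)\<^sup>2)"
  unfolding chi_norm_def by (simp add: sum_nonneg)

lemma chi_norm_fun_upd: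
  assumes "i < N"
  shows "chi_norm N (w(i := y)) = sqrt ((\<Sum>j\<in>{..<N} - {i}. (w j)\<^sup>2) + y\<^sup>2)"
proof -
  have "(\<Sum>j<N. ((w(i := y)) j)\<^sup>2) = y\<^sup>2 + (\<Sum>j\<in>{..<N} - {i}. ((w(i := y)) j)\<^sup>2)"
    using assms by (subst sum.remove[of _ i]) auto
  also have "(\<Sum>j\<in>{..<N} - {i}. ((w(i := y)) j)\<^sup>2) = (\<Sum>j\<in>{..<N} - {i}. (w j)\<^sup>2)"
    by (rule sum.cong) auto
  finally show ?thesis
    unfolding chi_norm_def by (simp add: add.commute)
qed

lemma (in product_sigma_finite) nn_integral_PiM_cong_coordinate:
  assumes "finite I" "i \<in> I"
    and "g \<in> borel_measurable (Pi\<^sub>M I M)" "h \<in> borel_measurable (Pi\<^sub>M I M)"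
    and "\<And>w. (\<integral>\<^sup>+y. g (w(i := y)) \<partial>M i) = (\<integral>\<^sup>+y. h (w(i := y)) \<partial>M i)"
  shows "integral\<^sup>N (Pi\<^sub>M I M) g = integral\<^sup>N (Pi\<^sub>M I M) h"
proof -
  define J where "J = I - {i}"
  have I: "I = insert i J" and J: "finite J" "i \<notin> J"
    using assms(1,2) by (auto simp: J_def)
  show ?thesis
    using assms(3-5) J unfolding I by (simp add: product_nn_integral_insert)
qed

lemma nn_integral_gauss_space_stein:
  assumes i: "i < N"
  shows "(\<integral>\<^sup>+w. (w i)\<^sup>2 * chi_norm N w ^ k \<partial>gauss_space N) =
    (\<integral>\<^sup>+w. chi_norm N w ^ k \<partial>gauss_space N) +
    k * (\<integral>\<^sup>+w. (w i)\<^sup>2 * chi_norm N w ^ k / chi_norm N w ^ 2 \<partial>gauss_space N)"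
proof -
  note gauss_space_component_measurable[OF i, measurable]
  interpret product_sigma_finite "\<lambda>_. std_normal"
    by (simp add: product_sigma_finite_def prob_space_imp_sigma_finite prob_space_normal_density)
  have meas: "(\<lambda>w. ennreal ((w i)\<^sup>2 * chi_norm N w ^ k)) \<in> borel_measurable (gauss_space N)"
    "(\<lambda>w. ennreal (chi_norm N w ^ k) + k * ennreal ((w i)\<^sup>2 * chi_norm N w ^ k / chi_norm N w ^ 2))
      \<in> borel_measurable (gauss_space N)"
    by measurable
  have "(\<integral>\<^sup>+w. (w i)\<^sup>2 * chi_norm N w ^ k \<partial>gauss_space N) =
      (\<integral>\<^sup>+w. ennreal (chi_norm N w ^ k) + k * ennreal ((w i)\<^sup>2 * chi_norm N w ^ k / chi_norm N w ^ 2)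
        \<partial>gauss_space N)"
    unfolding gauss_space_def
  proof (rule nn_integral_PiM_cong_coordinate)
    fix w :: "nat \<Rightarrow> real"
    define a where "a = (\<Sum>j\<in>{..<N} - {i}. (w j)\<^sup>2)"
    have a: "0 \<le> a"
      unfolding a_def by (simp add: sum_nonneg)
    have "(\<integral>\<^sup>+y. ((w(i := y)) i)\<^sup>2 * chi_norm N (w(i := y)) ^ k \<partial>std_normal) =
        (\<integral>\<^sup>+y. y\<^sup>2 * sqrt (a + y\<^sup>2) ^ k \<partial>std_normal)"
      using i by (simp add: chi_norm_fun_upd a_def)
    also have "\<dots> = (\<integral>\<^sup>+y. sqrt (a + y\<^sup>2) ^ k \<partial>std_normal) +
        k * (\<integral>\<^sup>+y. y\<^sup>2 * sqrt (a + y\<^sup>2) ^ k / sqrt (a + y\<^sup>2) ^ 2 \<partial>std_normal)"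
      using a by (rule nn_integral_std_normal_stein_sqrt_shift)
    also have "\<dots> = (\<integral>\<^sup>+y. ennreal (sqrt (a + y\<^sup>2) ^ k) +
        k * ennreal (y\<^sup>2 * sqrt (a + y\<^sup>2) ^ k / sqrt (a + y\<^sup>2) ^ 2) \<partial>std_normal)"
      by (simp add: nn_integral_add nn_integral_cmult)
    also have "\<dots> = (\<integral>\<^sup>+y. ennreal (chi_norm N (w(i := y)) ^ k) +
        k * ennreal (((w(i := y)) i)\<^sup>2 * chi_norm N (w(i := y)) ^ k / chi_norm N (w(i := y)) ^ 2)
        \<partial>std_normal)"
      using i by (simp add: chi_norm_fun_upd a_def)
    finally show "(\<integral>\<^sup>+y. ((w(i := y)) i)\<^sup>2 * chi_norm N (w(i := y)) ^ k \<partial>std_normal) = \<dots>" .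
  qed (use i meas in \<open>simp_all add: gauss_space_def\<close>)
  also have "\<dots> = (\<integral>\<^sup>+w. chi_norm N w ^ k \<partial>gauss_space N) +
      k * (\<integral>\<^sup>+w. (w i)\<^sup>2 * chi_norm N w ^ k / chi_norm N w ^ 2 \<partial>gauss_space N)"
  proof -
    have "(\<lambda>w. ennreal (chi_norm N w ^ k)) \<in> borel_measurable (gauss_space N)"
      "(\<lambda>w. ennreal ((w i)\<^sup>2 * chi_norm N w ^ k / chi_norm N w ^ 2)) \<in> borel_measurable (gauss_space N)"
      "(\<lambda>w. k * ennreal ((w i)\<^sup>2 * chi_norm N w ^ k / chi_norm N w ^ 2)) \<in> borel_measurable (gauss_space N)"
      by measurable
    then show ?thesis
      by (simp add: nn_integral_add nn_integral_cmult)
  qed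
  finally show ?thesis .
qed

lemma sum_sq_mult_chi_norm_pow: "(\<Sum>i<N. (w i)\<^sup>2 * chi_norm N w ^ k) = chi_norm N w ^ (k + 2)"
proof -
  have "(\<Sum>i<N. (w i)\<^sup>2 * chi_norm N w ^ k) = chi_norm N w ^ k * chi_norm N w ^ 2"
    by (simp add: chi_norm_sq sum_distrib_left mult.commute)
  then show ?thesis
    by (simp only: power_add)
qed

lemma sum_sq_mult_chi_norm_pow_div:
  assumes "0 < k"
  shows "(\<Sum>i<N. (w i)\<^sup>2 * chi_norm N w ^ k / chi_norm N w ^ 2) = chi_norm N w ^ k"
  using assms
  by (cases "chi_norm N w = 0") (simp_all flip: chi_norm_sq sum_divide_distrib sum_distrib_right)

lemma nn_integral_chi_norm_pow_add_2:
  "(\<integral>\<^sup>+w. chi_norm N w ^ (k + 2) \<partial>gauss_space N) = (N + k) * (\<integral>\<^sup>+w. chi_norm N w ^ k \<partial>gauss_space N)"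
proof -
  let ?M = "\<lambda>k. \<integral>\<^sup>+w. chi_norm N w ^ k \<partial>gauss_space N"
  let ?q = "\<lambda>i w. (w i)\<^sup>2 * chi_norm N w ^ k / chi_norm N w ^ 2"
  have meas: "(\<lambda>w. ennreal ((w i)\<^sup>2 * chi_norm N w ^ k)) \<in> borel_measurable (gauss_space N)"
    "(\<lambda>w. ennreal (?q i w)) \<in> borel_measurable (gauss_space N)"
    if "i < N" for i
  proof -
    note gauss_space_component_measurable[OF that, measurable]
    show "(\<lambda>w. ennreal ((w i)\<^sup>2 * chi_norm N w ^ k)) \<in> borel_measurable (gauss_space N)"
      "(\<lambda>w. ennreal (?q i w)) \<in> borel_measurable (gauss_space N)"
      by measurable
  qed
  have "?M (k + 2) = (\<integral>\<^sup>+w. (\<Sum>i<N. ennreal ((w i)\<^sup>2 * chi_norm N w ^ k)) \<partial>gauss_space N)"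
    by (simp add: sum_ennreal chi_norm_nonneg sum_sq_mult_chi_norm_pow)
  also have "\<dots> = (\<Sum>i<N. \<integral>\<^sup>+w. (w i)\<^sup>2 * chi_norm N w ^ k \<partial>gauss_space N)"
    by (rule nn_integral_sum) (simp add: meas)
  also have "\<dots> = (\<Sum>i<N. ?M k + k * (\<integral>\<^sup>+w. ?q i w \<partial>gauss_space N))"
    by (simp add: nn_integral_gauss_space_stein)
  also have "\<dots> = N * ?M k + k * (\<integral>\<^sup>+w. (\<Sum>i<N. ennreal (?q i w)) \<partial>gauss_space N)"
    by (subst nn_integral_sum) (simp_all add: meas sum.distrib flip: sum_distrib_left)
  also have "k * (\<integral>\<^sup>+w. (\<Sum>i<N. ennreal (?q i w)) \<partial>gauss_space N) = k * ?M k"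
    by (cases "k = 0") (simp_all add: sum_ennreal chi_norm_nonneg sum_sq_mult_chi_norm_pow_div)
  finally show ?thesis
    by (simp add: distrib_right)
qed

lemma nn_integral_chi_norm_pow_finite: "(\<integral>\<^sup>+w. chi_norm N w ^ k \<partial>gauss_space N) < top"
proof (induction k rule: less_induct)
  case (less k)
  let ?M = "\<lambda>k. \<integral>\<^sup>+w. chi_norm N w ^ k \<partial>gauss_space N"
  consider "k = 0" | "k = 1" | j where "k = j + 2"
    by (metis One_nat_def add_2_eq_Suc' not0_implies_Suc)
  then show ?case
  proof cases
    case 1
    then show ?thesis
      using prob_space.emeasure_space_1[OF prob_space_gauss_space] by simp
  next
    case 2
    have "?M 1 \<le> (\<integral>\<^sup>+w. ennreal (chi_norm N w ^ 0) + ennreal (chi_norm N w ^ 2) \<partial>gauss_space N)"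
    proof (rule nn_integral_mono)
      fix w
      have "chi_norm N w \<le> 1 + (chi_norm N w)\<^sup>2"
        using sqrt_le_one_plus[of "(chi_norm N w)\<^sup>2"] chi_norm_nonneg[of N w] by simp
      then have "ennreal (chi_norm N w) \<le> ennreal (1 + (chi_norm N w)\<^sup>2)"
        by (rule ennreal_leI)
      then show "ennreal (chi_norm N w ^ 1) \<le> ennreal (chi_norm N w ^ 0) + ennreal (chi_norm N w ^ 2)"
        by simp
    qed
    also have "\<dots> = ?M 0 + ?M 2"
      by (rule nn_integral_add) simp_all
    also have "?M 2 = N * ?M 0"
      using nn_integral_chi_norm_pow_add_2[of N 0] by (simp add: power2_eq_square)
    also have "?M 0 + N * ?M 0 < top"
      using less[of 0] 2 by (simp add: ennreal_mult_less_top of_nat_less_top)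
    finally show ?thesis
      using 2 by simp
  next
    case 3
    then have "?M k = (N + j) * ?M j"
      using nn_integral_chi_norm_pow_add_2[of N j] by simp
    with less[of j] 3 show ?thesis
      by (simp add: ennreal_mult_less_top of_nat_less_top)
  qed
qed

definition chi_moment :: "nat \<Rightarrow> nat \<Rightarrow> real" where
  "chi_moment N k = (\<integral>w. chi_norm N w ^ k \<partial>gauss_space N)"

lemma integrable_chi_norm_pow: "integrable (gauss_space N) (\<lambda>w. chi_norm N w ^ k)"
  by (rule integrableI_nonneg) (simp_all add: chi_norm_nonneg nn_integral_chi_norm_pow_finite)

lemma has_bochner_integral_chi_norm_pow:
  "has_bochner_integral (gauss_space N) (\<lambda>w. chi_norm N w ^ k) (chi_moment N k)"
  by (simp add: chi_moment_def has_bochner_integral_iff integrable_chi_norm_pow)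

lemma chi_moment_nonneg: "0 \<le> chi_moment N k"
  unfolding chi_moment_def by (simp add: chi_norm_nonneg)

lemma chi_moment_0: "chi_moment N 0 = 1"
  using prob_space.prob_space[OF prob_space_gauss_space] by (simp add: chi_moment_def)

lemma nn_integral_chi_norm_pow_eq: "(\<integral>\<^sup>+w. chi_norm N w ^ k \<partial>gauss_space N) = chi_moment N k"
  unfolding chi_moment_def
  by (intro nn_integral_eq_integral integrable_chi_norm_pow) (simp add: chi_norm_nonneg)

lemma chi_moment_add_2: "chi_moment N (k + 2) = (N + k) * chi_moment N k"
proof -
  have "ennreal (chi_moment N (k + 2)) = of_nat (N + k) * ennreal (chi_moment N k)"
    using nn_integral_chi_norm_pow_add_2[of N k] by (simp only: nn_integral_chi_norm_pow_eq of_nat_add)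
  also have "\<dots> = ennreal ((N + k) * chi_moment N k)"
    by (simp add: ennreal_of_nat_eq_real_of_nat ennreal_mult chi_moment_nonneg)
  finally show ?thesis
    by (simp add: chi_moment_nonneg)
qed

section \<open>Concentration of the chi distribution\<close>

lemma chi_moments_2_to_5:
  "chi_moment N 2 = N"
  "chi_moment N 3 = (N + 1) * chi_moment N 1"
  "chi_moment N 4 = N * (N + 2)"
  "chi_moment N 5 = (N + 3) * ((N + 1) * chi_moment N 1)"
  using chi_moment_add_2[of N 0] chi_moment_add_2[of N 1] chi_moment_add_2[of N 2] chi_moment_add_2[of N 3]
  by (simp_all add: chi_moment_0 eval_nat_numeral)

lemma chi_moment_weighted_square_nonneg:
  fixes b c :: real
  shows "0 \<le> (real N)\<^sup>2 * chi_moment N 5 - 2 * real N * b * chi_moment N 4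
    + (b\<^sup>2 + 2 * real N * c) * chi_moment N 3 - 2 * b * c * chi_moment N 2 + c\<^sup>2 * chi_moment N 1"
proof -
  let ?Z = "chi_norm N"
  have hb: "has_bochner_integral (gauss_space N)
      (\<lambda>w. (real N)\<^sup>2 * ?Z w ^ 5 - 2 * real N * b * ?Z w ^ 4 + (b\<^sup>2 + 2 * real N * c) * ?Z w ^ 3
        - 2 * b * c * ?Z w ^ 2 + c\<^sup>2 * ?Z w ^ 1)
      ((real N)\<^sup>2 * chi_moment N 5 - 2 * real N * b * chi_moment N 4
        + (b\<^sup>2 + 2 * real N * c) * chi_moment N 3 - 2 * b * c * chi_moment N 2 + c\<^sup>2 * chi_moment N 1)"
    by (intro has_bochner_integral_add has_bochner_integral_diff has_bochner_integral_mult_right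
        has_bochner_integral_chi_norm_pow)
  moreover have eq: "(\<lambda>w. (real N)\<^sup>2 * ?Z w ^ 5 - 2 * real N * b * ?Z w ^ 4 + (b\<^sup>2 + 2 * real N * c) * ?Z w ^ 3
        - 2 * b * c * ?Z w ^ 2 + c\<^sup>2 * ?Z w ^ 1) = (\<lambda>w. ?Z w * (real N * ?Z w ^ 2 - b * ?Z w + c)\<^sup>2)"
    by (rule ext) (simp add: power2_eq_square eval_nat_numeral algebra_simps)
  ultimately have "(real N)\<^sup>2 * chi_moment N 5 - 2 * real N * b * chi_moment N 4
        + (b\<^sup>2 + 2 * real N * c) * chi_moment N 3 - 2 * b * c * chi_moment N 2 + c\<^sup>2 * chi_moment N 1 =
      (\<integral>w. ?Z w * (real N * ?Z w ^ 2 - b * ?Z w + c)\<^sup>2 \<partial>gauss_space N)"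
    by (simp add: has_bochner_integral_iff)
  also have "\<dots> \<ge> 0"
    by (simp add: chi_norm_nonneg)
  finally show ?thesis .
qed

lemma chi_moment_1_sq_ge: "real N - 1 / 2 \<le> (chi_moment N 1)\<^sup>2"
proof (cases "N = 0")
  case False
  define n where "n = real N"
  define m where "m = chi_moment N 1"
  have n1: "1 \<le> n"
    using False by (simp add: n_def)
  have weighted: "0 \<le> n\<^sup>2 * ((n + 3) * ((n + 1) * m)) - 2 * n * b * (n * (n + 2))
      + (b\<^sup>2 + 2 * n * c) * ((n + 1) * m) - 2 * b * c * n + c\<^sup>2 * m" for b c
    using chi_moment_weighted_square_nonneg[of N b c] by (simp add: chi_moments_2_to_5 n_def m_def)
  have m_pos: "0 < m"
  proof (rule ccontr)
    assume "\<not> 0 < m"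
    then have "m = 0"
      using chi_moment_nonneg[of N 1] by (simp add: m_def)
    moreover have "0 < n * (n * (n + 2))"
      using n1 by simp
    ultimately show False
      using weighted[of 1 0] by simp
  qed
  \<comment> \<open>this choice of b and c makes the weighted square factor as (n + 1) m Q\<close>
  define Q where "Q = 4 * (n + 1)\<^sup>2 * m\<^sup>2 - (4 * n + 6) * n\<^sup>2"
  have "0 \<le> ((n + 1) * m) * Q"
    using weighted[of "2 * (n + 1) * m" "n * (n + 1)"]
    by (simp add: Q_def power2_eq_square algebra_simps)
  moreover have "0 < (n + 1) * m"
    using m_pos n1 by simp
  ultimately have "0 \<le> Q"
    by (simp add: zero_le_mult_iff)
  moreover have "(4 * n + 6) * n\<^sup>2 = 4 * (n + 1)\<^sup>2 * (n - 1 / 2) + 2"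
    by (simp add: power2_eq_square algebra_simps)
  ultimately have "4 * (n + 1)\<^sup>2 * (n - 1 / 2) < 4 * (n + 1)\<^sup>2 * m\<^sup>2"
    by (simp add: Q_def)
  then show ?thesis
    by (simp add: n_def m_def)
qed (simp add: order.trans[OF _ zero_le_power2])

lemma chi_norm_centered_moments:
  fixes N :: nat and m :: real
  defines "m \<equiv> chi_moment N 1"
  shows "has_bochner_integral (gauss_space N) (\<lambda>w. (chi_norm N w - m)\<^sup>2) (N - m\<^sup>2)"
    and "has_bochner_integral (gauss_space N) (\<lambda>w. (chi_norm N w - m) ^ 4)
      ((real N)\<^sup>2 + 2 * real N + (2 * real N - 4) * m\<^sup>2 - 3 * m ^ 4)"
proof -
  let ?Z = "chi_norm N"
  have "has_bochner_integral (gauss_space N) (\<lambda>w. ?Z w ^ 2 - 2 * m * ?Z w ^ 1 + m\<^sup>2 * ?Z w ^ 0)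
      (chi_moment N 2 - 2 * m * chi_moment N 1 + m\<^sup>2 * chi_moment N 0)"
    by (intro has_bochner_integral_add has_bochner_integral_diff has_bochner_integral_mult_right
        has_bochner_integral_chi_norm_pow)
  moreover have "(\<lambda>w. ?Z w ^ 2 - 2 * m * ?Z w ^ 1 + m\<^sup>2 * ?Z w ^ 0) = (\<lambda>w. (?Z w - m)\<^sup>2)"
    by (simp add: fun_eq_iff power2_eq_square algebra_simps)
  moreover have "chi_moment N 2 - 2 * m * chi_moment N 1 + m\<^sup>2 * chi_moment N 0 = N - m\<^sup>2"
    by (simp add: chi_moments_2_to_5 chi_moment_0 m_def power2_eq_square)
  ultimately show "has_bochner_integral (gauss_space N) (\<lambda>w. (?Z w - m)\<^sup>2) (N - m\<^sup>2)"
    by simp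
  have "has_bochner_integral (gauss_space N)
      (\<lambda>w. ?Z w ^ 4 - 4 * m * ?Z w ^ 3 + 6 * m\<^sup>2 * ?Z w ^ 2 - 4 * m ^ 3 * ?Z w ^ 1 + m ^ 4 * ?Z w ^ 0)
      (chi_moment N 4 - 4 * m * chi_moment N 3 + 6 * m\<^sup>2 * chi_moment N 2
        - 4 * m ^ 3 * chi_moment N 1 + m ^ 4 * chi_moment N 0)"
    by (intro has_bochner_integral_add has_bochner_integral_diff has_bochner_integral_mult_right
        has_bochner_integral_chi_norm_pow)
  moreover have "(\<lambda>w. ?Z w ^ 4 - 4 * m * ?Z w ^ 3 + 6 * m\<^sup>2 * ?Z w ^ 2 - 4 * m ^ 3 * ?Z w ^ 1
      + m ^ 4 * ?Z w ^ 0) = (\<lambda>w. (?Z w - m) ^ 4)"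
    by (simp add: fun_eq_iff eval_nat_numeral algebra_simps)
  moreover have "chi_moment N 4 - 4 * m * chi_moment N 3 + 6 * m\<^sup>2 * chi_moment N 2
      - 4 * m ^ 3 * chi_moment N 1 + m ^ 4 * chi_moment N 0
      = (real N)\<^sup>2 + 2 * real N + (2 * real N - 4) * m\<^sup>2 - 3 * m ^ 4"
    unfolding chi_moments_2_to_5 chi_moment_0 m_def[symmetric]
    by (simp add: power2_eq_square power3_eq_cube power4_eq_xxxx algebra_simps)
  ultimately show "has_bochner_integral (gauss_space N) (\<lambda>w. (?Z w - m) ^ 4)
      ((real N)\<^sup>2 + 2 * real N + (2 * real N - 4) * m\<^sup>2 - 3 * m ^ 4)"
    by simp
qed

lemma chi_norm_variance_le: "(\<integral>w. (chi_norm N w - chi_moment N 1)\<^sup>2 \<partial>gauss_space N) \<le> 1 / 2"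
  using chi_norm_centered_moments(1)[of N] chi_moment_1_sq_ge[of N]
  by (simp add: has_bochner_integral_iff)

lemma chi_norm_fourth_central_moment_le:
  "(\<integral>w. (chi_norm N w - chi_moment N 1) ^ 4 \<partial>gauss_space N) \<le> 5 / 4"
proof -
  define n where "n = real N"
  define x where "x = (chi_moment N 1)\<^sup>2"
  have x: "n - 1 / 2 \<le> x" "0 \<le> x" "0 \<le> n"
    using chi_moment_1_sq_ge[of N] by (simp_all add: n_def x_def)
  have "n\<^sup>2 + 2 * n + (2 * n - 4) * x - 3 * x\<^sup>2 - 5 / 4 = (x - (n - 1 / 2)) * (- n - 5 / 2 - 3 * x)"
    by (simp add: power2_eq_square algebra_simps)
  also have "\<dots> \<le> 0"
    using x by (intro mult_nonneg_nonpos) simp_all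
  finally have "n\<^sup>2 + 2 * n + (2 * n - 4) * x - 3 * x\<^sup>2 \<le> 5 / 4"
    by simp
  then show ?thesis
    using chi_norm_centered_moments(2)[of N]
    by (simp add: has_bochner_integral_iff n_def x_def flip: power_mult)
qed

section \<open>Quantization and entropy\<close>

definition quantize :: "real \<Rightarrow> int \<Rightarrow> real \<Rightarrow> real" where
  "quantize d K u = d * of_int (max (- K) (min K \<lfloor>u / d\<rfloor>))"

lemma quantize_measurable [measurable]: "(\<lambda>u. quantize d K u) \<in> borel_measurable borel"
  unfolding quantize_def by measurable

lemma quantize_image_subset:
  assumes "0 \<le> K"
  shows "quantize d K ` A \<subseteq> (\<lambda>j. d * of_int j) ` {- K..K}"
  using assms unfolding quantize_def by (auto intro!: imageI)

lemma card_quantize_image_le: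
  assumes "0 \<le> K"
  shows "real (card (quantize d K ` A)) \<le> 2 * of_int K + 1"
proof -
  have "card (quantize d K ` A) \<le> card ((\<lambda>j. d * of_int j) ` {- K..K})"
    by (intro card_mono quantize_image_subset assms) simp
  also have "\<dots> \<le> card {- K..K}"
    by (rule card_image_le) simp
  also have "\<dots> = nat (2 * K + 1)"
    by simp
  finally show ?thesis
    using assms by linarith
qed

lemma sq_le_fourth_power_div:
  fixes c u :: real
  assumes "0 < c" and "c\<^sup>2 \<le> u\<^sup>2"
  shows "u\<^sup>2 \<le> u ^ 4 / c\<^sup>2"
proof -
  have "u\<^sup>2 * c\<^sup>2 \<le> u\<^sup>2 * u\<^sup>2"
    using assms(2) by (intro mult_left_mono) simp_all
  then show ?thesis
    using assms(1) by (simp add: le_divide_eq power2_eq_square eval_nat_numeral mult_ac)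
qed

lemma quantize_sq_error_le:
  assumes d: "0 < d" and K: "1 \<le> K"
  shows "(u - quantize d K u)\<^sup>2 \<le> d\<^sup>2 + u ^ 4 / (of_int K * d)\<^sup>2"
proof -
  define j where "j = \<lfloor>u / d\<rfloor>"
  have j: "of_int j \<le> u / d" "u / d < of_int j + 1"
    unfolding j_def by linarith+
  have Kd: "0 < of_int K * d"
    using d K by simp
  have tail: "(u - quantize d K u)\<^sup>2 \<le> u ^ 4 / (of_int K * d)\<^sup>2"
    if "\<bar>u - quantize d K u\<bar> \<le> \<bar>u\<bar>" "of_int K * d \<le> \<bar>u\<bar>"
  proof -
    have "(u - quantize d K u)\<^sup>2 \<le> u\<^sup>2"
      using that(1) by (simp add: abs_le_square_iff)
    also have "\<dots> \<le> u ^ 4 / (of_int K * d)\<^sup>2"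
    proof (rule sq_le_fourth_power_div[OF Kd])
      have "(of_int K * d)\<^sup>2 \<le> \<bar>u\<bar>\<^sup>2"
        using Kd that(2) by (intro power_mono) simp_all
      then show "(of_int K * d)\<^sup>2 \<le> u\<^sup>2"
        by simp
    qed
    finally show ?thesis .
  qed
  consider "- K \<le> j \<and> j \<le> K" | "K < j" | "j < - K"
    by linarith
  then show ?thesis
  proof cases
    case 1
    then have "u - quantize d K u = d * (u / d - of_int j)"
      using d by (simp add: quantize_def j_def[symmetric] algebra_simps)
    moreover have "0 \<le> u / d - of_int j" "u / d - of_int j \<le> 1"
      using j by simp_all
    ultimately have "(u - quantize d K u)\<^sup>2 \<le> d\<^sup>2"
      using d by (simp add: power_mult_distrib power_le_one)
    then show ?thesis
      by (simp add: add_increasing2)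
  next
    case 2
    then have q: "quantize d K u = d * of_int K"
      using K by (simp add: quantize_def j_def[symmetric])
    have "of_int K < u / d"
      using 2 j by linarith
    then have "of_int K * d < u"
      using d by (simp add: pos_less_divide_eq)
    then have "(u - quantize d K u)\<^sup>2 \<le> u ^ 4 / (of_int K * d)\<^sup>2"
      using Kd by (intro tail) (auto simp: q mult.commute)
    then show ?thesis
      by (simp add: add_increasing)
  next
    case 3
    then have q: "quantize d K u = - d * of_int K"
      using K by (simp add: quantize_def j_def[symmetric])
    have "u / d < - of_int K"
      using 3 j by linarith
    then have "u < - (of_int K * d)"
      using d by (simp add: pos_divide_less_eq)
    then have "(u - quantize d K u)\<^sup>2 \<le> u ^ 4 / (of_int K * d)\<^sup>2"
      using Kd by (intro tail) (auto simp: q mult.commute)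
    then show ?thesis
      by (simp add: add_increasing)
  qed
qed

lemma (in prob_space) quantizer_of_fourth_moment:
  fixes X :: "'a \<Rightarrow> real"
  assumes X [measurable]: "X \<in> borel_measurable M"
    and int4: "integrable M (\<lambda>x. (X x - c) ^ 4)" and mom4: "(\<integral>x. (X x - c) ^ 4 \<partial>M) \<le> 9 / 4"
    and D: "0 < D" "D \<le> 1"
  obtains f where "f \<in> borel_measurable borel" "finite ((f \<circ> X) ` space M)"
    "real (card ((f \<circ> X) ` space M)) \<le> 9 / D"
    "integrable M (\<lambda>x. (X x - f (X x))\<^sup>2)" "(\<integral>x. (X x - f (X x))\<^sup>2 \<partial>M) \<le> D"
proof
  \<comment> \<open>rounding costs d^2 = D/2, truncation at K d costs E (X - c)^4 / (K d)^2 \<le> D/2\<close>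
  define d where "d = sqrt (D / 2)"
  define K where "K = \<lceil>3 / D\<rceil>"
  define f where "f z = c + quantize d K (z - c)" for z
  have d: "0 < d" "d\<^sup>2 = D / 2"
    using D by (simp_all add: d_def)
  have K0: "3 / D \<le> of_int K" "of_int K \<le> 3 / D + 1"
    unfolding K_def by linarith+
  then have K: "3 \<le> of_int K * D" "of_int K \<le> 3 / D + 1"
    using D by (simp_all add: pos_divide_le_eq)
  have "3 \<le> 3 / D"
    using D by (simp add: field_simps)
  with K0 have K1: "1 \<le> K"
    by simp
  show "f \<in> borel_measurable borel"
    unfolding f_def[abs_def] by measurable
  define Q where "Q = quantize d K ` UNIV"
  have Q: "finite Q" "real (card Q) \<le> 2 * of_int K + 1"
    using quantize_image_subset[of K d UNIV] card_quantize_image_le[of K d UNIV] K1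
    by (auto simp: Q_def intro: finite_subset)
  have img: "(f \<circ> X) ` space M \<subseteq> (\<lambda>u. c + u) ` Q"
    by (auto simp: f_def Q_def)
  show fin: "finite ((f \<circ> X) ` space M)"
    using img Q(1) by (rule finite_subset[OF _ finite_imageI])
  have "card ((f \<circ> X) ` space M) \<le> card ((\<lambda>u. c + u) ` Q)"
    using img Q(1) by (intro card_mono) simp_all
  also have "\<dots> \<le> card Q"
    by (rule card_image_le[OF Q(1)])
  finally have "real (card ((f \<circ> X) ` space M)) \<le> 2 * of_int K + 1"
    using Q(2) by linarith
  also have "\<dots> \<le> 9 / D"
    using K(2) D by (simp add: field_simps)
  finally show "real (card ((f \<circ> X) ` space M)) \<le> 9 / D" .
  define g where "g x = d\<^sup>2 + (X x - c) ^ 4 / (of_int K * d)\<^sup>2" for x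
  have err: "(X x - f (X x))\<^sup>2 \<le> g x" for x
    using quantize_sq_error_le[OF d(1) K1, of "X x - c"] by (simp add: f_def g_def diff_diff_eq)
  have g_int: "integrable M g"
    unfolding g_def using int4 by simp
  show int: "integrable M (\<lambda>x. (X x - f (X x))\<^sup>2)"
  proof (rule Bochner_Integration.integrable_bound[OF g_int])
    show "AE x in M. norm ((X x - f (X x))\<^sup>2) \<le> norm (g x)"
      using err by (intro AE_I2) (simp add: order.trans[OF _ abs_ge_self])
  qed (simp add: f_def)
  have "(\<integral>x. (X x - f (X x))\<^sup>2 \<partial>M) \<le> (\<integral>x. g x \<partial>M)"
    using err by (intro integral_mono int g_int)
  also have "\<dots> = D / 2 + (\<integral>x. (X x - c) ^ 4 \<partial>M) / (of_int K * d)\<^sup>2"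
    unfolding g_def using int4 d(2) by (simp add: prob_space)
  also have "\<dots> \<le> D / 2 + (9 / 4) / (of_int K * d)\<^sup>2"
    using divide_right_mono[OF mom4, of "(of_int K * d)\<^sup>2"] by simp
  also have "(9 / 4) / (of_int K * d)\<^sup>2 \<le> D / 2"
  proof -
    have "9 \<le> (of_int K * D)\<^sup>2"
      using power_mono[OF K(1), of 2] by simp
    moreover have "D / 2 * (of_int K * d)\<^sup>2 = (of_int K * D)\<^sup>2 / 4"
      using d(2) by (simp add: power_mult_distrib power2_eq_square)
    ultimately have "9 / 4 \<le> D / 2 * (of_int K * d)\<^sup>2"
      by simp
    moreover have "0 < (of_int K * d)\<^sup>2"
      using K1 d(1) by simp
    ultimately show ?thesis
      by (simp add: pos_divide_le_eq mult.commute)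
  qed
  finally show "(\<integral>x. (X x - f (X x))\<^sup>2 \<partial>M) \<le> D"
    by simp
qed

lemma neg_mult_ln_le:
  fixes p n :: real
  assumes p: "0 \<le> p" and n: "0 < n"
  shows "- (p * ln p) \<le> p * ln n + (1 / n - p)"
proof (cases "p = 0")
  case False
  with p have p: "0 < p" by simp
  have "ln (1 / (n * p)) \<le> 1 / (n * p) - 1"
    using p n by (intro ln_le_minus_one) simp
  then have "p * ln (1 / (n * p)) \<le> p * (1 / (n * p) - 1)"
    using p by (simp add: mult_left_mono)
  also have "p * (1 / (n * p) - 1) = 1 / n - p"
    using p n by (simp add: field_simps)
  also have "ln (1 / (n * p)) = - ln n - ln p"
    using p n by (simp add: ln_div ln_mult)
  finally show ?thesis
    by (simp add: algebra_simps)
qed (use n in simp)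

lemma finite_disc_entropy_if_finite: "finite (X ` space M) \<Longrightarrow> finite_disc_entropy M X"
  unfolding finite_disc_entropy_def by simp

lemma (in prob_space) disc_entropy_le_ln_card:
  assumes fin: "finite (X ` space M)" and events: "\<And>y. {x \<in> space M. X x = y} \<in> events"
  shows "disc_entropy M X \<le> ln (card (X ` space M))"
proof -
  define R where "R = X ` space M"
  define p where "p y = prob {x \<in> space M. X x = y}" for y
  have R: "finite R" "R \<noteq> {}" "0 < real (card R)"
    using fin not_empty by (simp_all add: R_def card_gt_0_iff)
  have "(\<Sum>y\<in>R. p y) = prob (\<Union>y\<in>R. {x \<in> space M. X x = y})"
    unfolding p_def using R(1) events
    by (intro finite_measure_finite_Union[symmetric]) (auto simp: disjoint_family_on_def)
  also have "(\<Union>y\<in>R. {x \<in> space M. X x = y}) = space M"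
    by (auto simp: R_def)
  finally have sum_p: "(\<Sum>y\<in>R. p y) = 1"
    by (simp add: prob_space)
  have "disc_entropy M X = (\<Sum>y\<in>R. - (p y * ln (p y)))"
    unfolding disc_entropy_def R_def p_def using fin by simp
  also have "\<dots> \<le> (\<Sum>y\<in>R. p y * ln (card R) + (1 / card R - p y))"
    using R(3) by (intro sum_mono neg_mult_ln_le) (simp_all add: p_def)
  also have "\<dots> = ln (card R)"
    using R sum_p by (simp add: sum.distrib sum_subtractf flip: sum_distrib_right)
  finally show ?thesis
    by (simp add: R_def)
qed

lemma ln_9_div_le:
  fixes D :: real
  assumes "0 < D" "D \<le> 1 / 2"
  shows "ln (9 / D) \<le> 5 * ln (1 / D)"
proof -
  have "ln 9 \<le> ln ((2::real) ^ 4)"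
    by simp
  also have "\<dots> = 4 * ln 2"
    using ln_realpow[of "2::real" 4] by simp
  also have "\<dots> \<le> 4 * ln (1 / D)"
    using assms by (simp add: field_simps)
  finally show ?thesis
    using assms by (simp add: ln_div)
qed

lemma chi_norm_quantizer:
  assumes D: "0 < D" "D \<le> 1"
  obtains f where "f \<in> borel_measurable borel" "finite ((f \<circ> chi_norm N) ` space (gauss_space N))"
    "integrable (gauss_space N) (\<lambda>\<omega>. (chi_norm N \<omega> - f (chi_norm N \<omega>))\<^sup>2)"
    "(\<integral>\<omega>. (chi_norm N \<omega> - f (chi_norm N \<omega>))\<^sup>2 \<partial>gauss_space N) \<le> D"
    "ln (card ((f \<circ> chi_norm N) ` space (gauss_space N))) \<le> 5 * ln (1 / D)"
proof -
  interpret prob_space "gauss_space N"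
    by (rule prob_space_gauss_space)
  define m where "m = chi_moment N 1"
  show ?thesis
  proof (cases "1 / 2 \<le> D")
    case True
    show ?thesis
    proof (rule that[of "\<lambda>_. m"])
      show "integrable (gauss_space N) (\<lambda>\<omega>. (chi_norm N \<omega> - m)\<^sup>2)"
        using chi_norm_centered_moments(1)[of N] by (simp add: has_bochner_integral_iff m_def)
      show "(\<integral>\<omega>. (chi_norm N \<omega> - m)\<^sup>2 \<partial>gauss_space N) \<le> D"
        using chi_norm_variance_le[of N] True by (simp add: m_def)
      show "ln (card (((\<lambda>_. m) \<circ> chi_norm N) ` space (gauss_space N))) \<le> 5 * ln (1 / D)"
        using D not_empty by (simp add: image_constant_conv)
    qed (use not_empty in \<open>simp_all add: image_constant_conv\<close>)
  next
    case False
    have "integrable (gauss_space N) (\<lambda>w. (chi_norm N w - m) ^ 4)"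
      "(\<integral>w. (chi_norm N w - m) ^ 4 \<partial>gauss_space N) \<le> 9 / 4"
      using chi_norm_centered_moments(2)[of N] chi_norm_fourth_central_moment_le[of N]
      by (simp_all add: has_bochner_integral_iff m_def)
    then obtain f where f: "f \<in> borel_measurable borel" "finite ((f \<circ> chi_norm N) ` space (gauss_space N))"
      "real (card ((f \<circ> chi_norm N) ` space (gauss_space N))) \<le> 9 / D"
      "integrable (gauss_space N) (\<lambda>\<omega>. (chi_norm N \<omega> - f (chi_norm N \<omega>))\<^sup>2)"
      "(\<integral>\<omega>. (chi_norm N \<omega> - f (chi_norm N \<omega>))\<^sup>2 \<partial>gauss_space N) \<le> D"
      using quantizer_of_fourth_moment[OF chi_norm_measurable _ _ D] by blast
    show ?thesis
    proof (rule that[OF f(1,2,4,5)])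
      have "0 < card ((f \<circ> chi_norm N) ` space (gauss_space N))"
        using f(2) not_empty by (simp add: card_gt_0_iff)
      then have "ln (card ((f \<circ> chi_norm N) ` space (gauss_space N))) \<le> ln (9 / D)"
        using f(3) D by (subst ln_le_cancel_iff) simp_all
      also have "\<dots> \<le> 5 * ln (1 / D)"
        using D False by (intro ln_9_div_le) simp_all
      finally show "ln (card ((f \<circ> chi_norm N) ` space (gauss_space N))) \<le> 5 * ln (1 / D)" .
    qed
  qed
qed

theorem lemma15:
  "\<exists>C::real. C > 0 \<and>
     (\<forall>(N::nat) (D::real). 0 < D \<and> D \<le> 1 \<longrightarrow>
        (\<exists>f :: real \<Rightarrow> real.
            f \<in> borel_measurable borel \<and>
            countable ((f \<circ> chi_norm N) ` space (gauss_space N)) \<and>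
            integrable (gauss_space N) (\<lambda>\<omega>. (chi_norm N \<omega> - f (chi_norm N \<omega>))\<^sup>2) \<and>
            (\<integral>\<omega>. (chi_norm N \<omega> - f (chi_norm N \<omega>))\<^sup>2 \<partial>gauss_space N) \<le> D \<and>
            finite_disc_entropy (gauss_space N) (f \<circ> chi_norm N) \<and>
            disc_entropy (gauss_space N) (f \<circ> chi_norm N) \<le> C * ln (1 / D)))"
proof (intro exI[of _ 5] conjI allI impI)
  fix N :: nat and D :: real
  assume "0 < D \<and> D \<le> 1"
  then obtain f where f: "f \<in> borel_measurable borel" "finite ((f \<circ> chi_norm N) ` space (gauss_space N))"
    "integrable (gauss_space N) (\<lambda>\<omega>. (chi_norm N \<omega> - f (chi_norm N \<omega>))\<^sup>2)"
    "(\<integral>\<omega>. (chi_norm N \<omega> - f (chi_norm N \<omega>))\<^sup>2 \<partial>gauss_space N) \<le> D"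
    "ln (card ((f \<circ> chi_norm N) ` space (gauss_space N))) \<le> 5 * ln (1 / D)"
    using chi_norm_quantizer by blast
  have "disc_entropy (gauss_space N) (f \<circ> chi_norm N) \<le> ln (card ((f \<circ> chi_norm N) ` space (gauss_space N)))"
    using f(1,2) by (intro prob_space.disc_entropy_le_ln_card prob_space_gauss_space) measurable
  with f show "\<exists>f. f \<in> borel_measurable borel \<and>
      countable ((f \<circ> chi_norm N) ` space (gauss_space N)) \<and>
      integrable (gauss_space N) (\<lambda>\<omega>. (chi_norm N \<omega> - f (chi_norm N \<omega>))\<^sup>2) \<and>
      (\<integral>\<omega>. (chi_norm N \<omega> - f (chi_norm N \<omega>))\<^sup>2 \<partial>gauss_space N) \<le> D \<and>
      finite_disc_entropy (gauss_space N) (f \<circ> chi_norm N) \<and>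
      disc_entropy (gauss_space N) (f \<circ> chi_norm N) \<le> 5 * ln (1 / D)"
    by (intro exI[of _ f]) (auto simp: countable_finite finite_disc_entropy_if_finite)
qed simp

end
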